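(* In the queueing model of the context, fix $\theta\ge0$ and let $\vec b=(b_1,\dots,b_n)$ with $b_i=\widetilde{B(\mathcal J_i)}(\theta)$. Then: (a) for every service-arrival joint distribution $\mathcal V$, $\widetilde{B(\mathcal V)}(\theta)=\widetilde{\mathcal V}(\theta,\vec b)$; (b) $\vec b$ is the least (componentwise) nonnegative solution of the system $b_i=\widetilde{\mathcal J_i}(\theta,\vec b)$, $i=1,\dots,n$.
   Context: Model: a single server; job classes $1,\dots,n$. Class $i$ jobs arrive according to independent Poisson processes of rates $\lambda_i>0$; original sizes of class $i$ jobs are i.i.d. with positive distribution $S_i$. Scheduling is preemptive priority (lower index = higher priority, FCFS within class, preempt-resume) with preemption overhead: when a class $k$ job in service is preempted by the arrival of a class $<k$ job, a nonpreemptible class $k$ pause (length $\sim C_k$) begins; whenever a job or pause completes and jobs remain, the best-priority job is identified and, if it is a previously paused class $k$ job, a nonpreemptible class $k$ resume (length $\sim D_k$) begins, else that job starts service; when a class $k$ resume completes, if a class $<k$ job arrived during it the resume fails and a class $k$ pause begins, otherwise the job continues service. Overhead lengths are i.i.d. and independent of everything else. A class $k$ job's pauses and resumes are attributed to it: its effective size is $R_k$ = original size plus total length of its pauses and resumes, and $A_{k,i}$ is the number of class $i$ arrivals during its effective service time; $\mathcal J_k=(R_k,\vec A_k)$ with $\vec A_k=(A_{k,1},\dots,A_{k,n})$ is the class $k$ job joint distribution. A service-arrival joint distribution is a joint distribution $\mathcal V=(R_{\mathcal V},\vec A_{\mathcal V})$ on $\mathbb R_+\times\mathbb Z_+^n$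 (components possibly dependent); its service-arrival joint transform is $\widetilde{\mathcal V}(\theta,\vec z)=\mathbb E\bigl[e^{-\theta R_{\mathcal V}}\prod_{i=1}^n z_i^{A_{\mathcal V,i}}\bigr]$. The job joint transform is $\widetilde{\mathcal J_k}$. The busy period started by $\mathcal V$, $B(\mathcal V)$, is the sum of the duration components over all nodes of the multitype Galton–Watson tree whose root draws $(R_{\mathcal V},\vec A_{\mathcal V})\sim\mathcal V$ and has $A_{\mathcal V,i}$ children of class $i$, where each class $i$ node independently draws $(R_i,\vec A_i)\sim\mathcal J_i$ and has $A_{i,j}$ children of class $j$, recursively; equivalently $B(\mathcal V)\stackrel{d}{=}R_{\mathcal V}+\sum_{i=1}^n\sum_{j=1}^{A_{\mathcal V,i}}B(\mathcal J_i)^{(j)}$ with the $B(\mathcal J_i)^{(j)}$ independent copies, independent of $\mathcal V$. $\widetilde X(\theta)=\mathbb E[e^{-\theta X}]$ (with $e^{-\theta\cdot\infty}=0$). *)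

theory Defs
  imports "HOL-Probability.Probability"
begin

text \<open>Classes are the elements of a finite type 'n. A service-arrival joint
distribution is a probability measure on real \<times> ('n \<Rightarrow> nat): the first
component is the duration, the second the vector of arrival counts per class.\<close>

type_synonym 'n sa = "real \<times> ('n \<Rightarrow> nat)"

text \<open>Laplace transform of an extended nonnegative value, with exp(-theta * infinity) = 0.\<close>
definition lt_enn :: "real \<Rightarrow> ennreal \<Rightarrow> real" where
  "lt_enn \<theta> x = (if x = \<top> then 0 else exp (- \<theta> * enn2real x))"

definition sa_transform :: "'n::finite sa measure \<Rightarrow> real \<Rightarrow> ('n \<Rightarrow> real) \<Rightarrow> ennreal" where
  "sa_transform M \<theta> z =
     (\<integral>\<^sup>+ x. ennreal (exp (- \<theta> * fst x) * (\<Prod>i\<in>UNIV. z i ^ snd x i)) \<partial>M)"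

text \<open>Multitype Galton--Watson tree, Ulam--Harris labelling: a node is a list of
(class, index) pairs. The root [] draws from V; a node whose label ends in (j,k)
is a class j node and draws independently from J j. Node u @ [(j,k)] exists iff
u exists and k is less than the number of class j arrivals drawn at u.\<close>
definition gw_space ::
  "'n sa measure \<Rightarrow> ('n \<Rightarrow> 'n sa measure) \<Rightarrow> (('n \<times> nat) list \<Rightarrow> 'n sa) measure" where
  "gw_space V J = (\<Pi>\<^sub>M u\<in>UNIV. if u = [] then V else J (fst (last u)))"

definition gw_node :: "(('n \<times> nat) list \<Rightarrow> 'n sa) \<Rightarrow> ('n \<times> nat) list \<Rightarrow> bool" where
  "gw_node \<omega> u \<longleftrightarrow> (\<forall>m < length u. snd (u ! m) < snd (\<omega> (take m u)) (fst (u ! m)))"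

definition busy :: "(('n \<times> nat) list \<Rightarrow> 'n sa) \<Rightarrow> ennreal" where
  "busy \<omega> = (\<integral>\<^sup>+ u. (if gw_node \<omega> u then ennreal (fst (\<omega> u)) else 0) \<partial>count_space UNIV)"

definition busy_transform :: "'n sa measure \<Rightarrow> ('n \<Rightarrow> 'n sa measure) \<Rightarrow> real \<Rightarrow> real" where
  "busy_transform V J \<theta> = (\<integral> \<omega>. lt_enn \<theta> (busy \<omega>) \<partial>gw_space V J)"

end

theory Submission
  imports Defs
begin

text \<open>
  Cut the Galton--Watson tree at its root: given the root label (R, A), the subtrees below the
  children of the root are independent, and the one below a class j child is distributed as the
  tree started by J j. The busy period is R plus the busy periods of these subtrees, so its
  Laplace transform factorises over them; this is (a), and the fixed-point equation of (b) is (a)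
  for V = J i.

  For minimality, the mean of the transform restricted to trees of height less than k is the
  k-th iterate, started at 0, of the map c \<mapsto> (\<lambda>i. sa_transform (J i) \<theta> c), so it lies
  below every nonnegative fixed point. It increases to b as k \<rightarrow> \<infinity> because a tree of infinite
  height has an infinite busy period almost surely. To see this, use that R > 0 a.s. to choose
  \<kappa> and a weight v \<ge> exp (-\<kappa> R) of mean at most 1/2: then the means of the products of v over
  the first k generations, completed by 1 resp. 0 at generation k, differ by at most 2^-k, and
  their difference dominates the expectation of exp (-\<kappa> B) on infinite trees.
\<close>

lemma prod_emb_UNIV_PiE:
  "(\<And>i. space (M i) = UNIV) \<Longrightarrow> prod_emb UNIV M K (Pi\<^sub>E K A) = {f. \<forall>i\<in>K. f i \<in> A i}"
  by (auto simp: prod_emb_def PiE_def extensional_def Pi_def)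

lemma sets_PiM_cylinder:
  assumes "\<And>i. space (M i) = UNIV" "finite K" "\<And>i. i \<in> K \<Longrightarrow> A i \<in> sets (M i)"
  shows "{f. \<forall>i\<in>K. f i \<in> A i} \<in> sets (PiM UNIV M)"
  using sets_PiM_I[of K UNIV A M] prod_emb_UNIV_PiE[of M K A] assms by simp

lemma emeasure_PiM_cylinder:
  assumes "\<And>i. prob_space (M i)" "\<And>i. space (M i) = UNIV" "finite K" "\<And>i. i \<in> K \<Longrightarrow> A i \<in> sets (M i)"
  shows "emeasure (PiM UNIV M) {f. \<forall>i\<in>K. f i \<in> A i} = (\<Prod>i\<in>K. emeasure (M i) (A i))"
  using emeasure_PiM_emb[of UNIV M K A] prod_emb_UNIV_PiE[of M K A] assms by simp

lemma finite_Cons_heads: "finite K \<Longrightarrow> finite {p. \<exists>w. p # w \<in> K}"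
  by (rule finite_subset[of _ "hd ` K"]) (auto intro!: image_eqI)

lemma finite_Cons_tails: "finite K \<Longrightarrow> finite {w. p # w \<in> K}"
  by (rule finite_subset[of _ "tl ` K"]) (auto intro!: image_eqI)

lemma ball_lists_Nil_Cons:
  "(\<forall>u\<in>K. P u) \<longleftrightarrow> ([] \<in> K \<longrightarrow> P []) \<and> (\<forall>p w. p # w \<in> K \<longrightarrow> P (p # w))"
  by (metis list.exhaust)

lemma prod_lists_Nil_Cons:
  fixes f :: "'a list \<Rightarrow> 'b::comm_monoid_mult"
  assumes "finite K"
  shows "(\<Prod>u\<in>K. f u) =
    (if [] \<in> K then f [] else 1) * (\<Prod>p\<in>{p. \<exists>w. p # w \<in> K}. \<Prod>w\<in>{w. p # w \<in> K}. f (p # w))"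
proof -
  let ?S = "Sigma {p. \<exists>w. p # w \<in> K} (\<lambda>p. {w. p # w \<in> K})"
  have "(\<Prod>p\<in>{p. \<exists>w. p # w \<in> K}. \<Prod>w\<in>{w. p # w \<in> K}. f (p # w)) = (\<Prod>z\<in>?S. f (fst z # snd z))"
    using assms by (subst prod.Sigma) (auto simp: case_prod_beta finite_Cons_heads finite_Cons_tails)
  also have "\<dots> = (\<Prod>u\<in>(\<lambda>z. fst z # snd z) ` ?S. f u)"
    by (subst prod.reindex) (auto simp: inj_on_def)
  also have "(\<lambda>z. fst z # snd z) ` ?S = K - {[]}"
  proof (rule set_eqI)
    show "u \<in> (\<lambda>z. fst z # snd z) ` ?S \<longleftrightarrow> u \<in> K - {[]}" for u
      by (cases u) (force simp: image_iff)+
  qed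
  finally show ?thesis
    using assms by (simp add: prod.remove)
qed

lemma prod_power_eq_prod_Sigma:
  fixes f :: "'a \<Rightarrow> 'b::comm_monoid_mult"
  assumes "finite A"
  shows "(\<Prod>i\<in>A. f i ^ a i) = (\<Prod>p\<in>Sigma A (\<lambda>i. {..<a i}). f (fst p))"
proof -
  have "(\<Prod>i\<in>A. \<Prod>m<a i. f i) = (\<Prod>p\<in>Sigma A (\<lambda>i. {..<a i}). f (fst p))"
    using assms by (subst prod.Sigma) (auto simp: case_prod_beta)
  then show ?thesis
    by simp
qed

lemma prod_le_half:
  fixes x :: "'a \<Rightarrow> real"
  assumes "finite S" "S \<noteq> {}" "\<And>i. i \<in> S \<Longrightarrow> 0 \<le> x i" "\<And>i. i \<in> S \<Longrightarrow> x i \<le> 1/2"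
  shows "(\<Prod>i\<in>S. x i) \<le> 1/2"
proof -
  obtain a where a: "a \<in> S"
    using assms(2) by auto
  have x1: "x i \<le> 1" if "i \<in> S" for i
    using assms(4)[OF that] by simp
  have "(\<Prod>i\<in>S. x i) = x a * (\<Prod>i\<in>S - {a}. x i)"
    using a assms(1) by (simp add: prod.remove)
  also have "\<dots> \<le> 1/2 * 1"
    by (intro mult_mono prod_le_1 prod_nonneg conjI assms(4) a) (auto intro: assms(3) x1)
  finally show ?thesis
    by simp
qed

lemma prod_le_prod_add:
  fixes x y :: "'a \<Rightarrow> real"
  assumes "finite S" "0 \<le> d"
    and "\<And>i. i \<in> S \<Longrightarrow> 0 \<le> y i \<and> y i \<le> x i \<and> x i \<le> y i + d \<and> x i \<le> 1/2"
  shows "(\<Prod>i\<in>S. x i) \<le> (\<Prod>i\<in>S. y i) + d"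
  using assms(1,3)
proof (induction S rule: finite_induct)
  case empty
  then show ?case
    using assms(2) by simp
next
  case (insert a F)
  have xa: "0 \<le> y a" "y a \<le> x a" "x a \<le> y a + d" "x a \<le> 1/2"
    using insert.prems by auto
  have IH: "(\<Prod>i\<in>F. x i) \<le> (\<Prod>i\<in>F. y i) + d"
    using insert by auto
  have Y: "0 \<le> (\<Prod>i\<in>F. y i)" "(\<Prod>i\<in>F. y i) \<le> (\<Prod>i\<in>F. x i)"
    using insert.prems by (auto intro!: prod_nonneg prod_mono)
  show ?case
  proof (cases "F = {}")
    case False
    have X: "(\<Prod>i\<in>F. x i) \<le> 1/2"
      using False insert by (intro prod_le_half) (auto intro: order.trans[of _ "y i" "x i" for i])
    have "(\<Prod>i\<in>insert a F. x i) =
        x a * ((\<Prod>i\<in>F. x i) - (\<Prod>i\<in>F. y i)) + (x a - y a) * (\<Prod>i\<in>F. y i) + y a * (\<Prod>i\<in>F. y i)"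
      using insert by (simp add: algebra_simps)
    also have "\<dots> \<le> 1/2 * d + d * (1/2) + y a * (\<Prod>i\<in>F. y i)"
      using xa IH X Y by (intro add_mono mult_mono) auto
    finally show ?thesis
      using insert by simp
  qed (use xa in simp)
qed

lemma prod_power_le_prod_power_add:
  fixes x y :: "'n::finite \<Rightarrow> real"
  assumes "0 \<le> d" "\<And>i. 0 \<le> y i" "\<And>i. y i \<le> x i" "\<And>i. x i \<le> y i + d" "\<And>i. x i \<le> 1/2"
  shows "(\<Prod>i\<in>UNIV. x i ^ a i) \<le> (\<Prod>i\<in>UNIV. y i ^ a i) + d"
proof -
  have "(\<Prod>p\<in>Sigma UNIV (\<lambda>i. {..<a i}). x (fst p)) \<le> (\<Prod>p\<in>Sigma UNIV (\<lambda>i. {..<a i}). y (fst p)) + d"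
    using assms by (intro prod_le_prod_add) auto
  then show ?thesis
    by (simp add: prod_power_eq_prod_Sigma)
qed

lemma ennreal_prod_prod:
  "(\<And>j m. 0 \<le> f j m) \<Longrightarrow> ennreal (\<Prod>j\<in>A. \<Prod>m\<in>B j. f j m) = (\<Prod>j\<in>A. \<Prod>m\<in>B j. ennreal (f j m))"
  by (simp add: prod_ennreal prod_nonneg)

lemma integrable_unit_bounded:
  fixes f :: "'a \<Rightarrow> real"
  assumes "prob_space M" "f \<in> borel_measurable M" "\<And>x. 0 \<le> f x" "\<And>x. f x \<le> 1"
  shows "integrable M f"
proof -
  interpret prob_space M by fact
  show ?thesis
    using assms by (intro integrable_const_bound[where B=1]) auto
qed

lemma Inter_less_inverse_Suc: "(\<Inter>n. {x. f x < 1 / real (Suc n)}) = {x. f x \<le> (0::real)}"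
proof (intro set_eqI iffI)
  fix x
  assume "x \<in> (\<Inter>n. {x. f x < 1 / real (Suc n)})"
  then have less: "f x < 1 / real (Suc n)" for n
    by auto
  show "x \<in> {x. f x \<le> 0}"
  proof (rule ccontr)
    assume "x \<notin> {x. f x \<le> 0}"
    then obtain n where "1 / real (Suc n) < f x"
      using nat_approx_posE[of "f x"] by auto
    with less[of n] show False
      by simp
  qed
next
  fix x
  assume "x \<in> {x. f x \<le> 0}"
  then have "f x < 1 / real (Suc n)" for n
    using le_less_trans[of "f x" 0 "1 / real (Suc n)"] by simp
  then show "x \<in> (\<Inter>n. {x. f x < 1 / real (Suc n)})"
    by simp
qed

section \<open>Labelled trees\<close>

lemma measurable_snd_sa[measurable]:
  "(snd :: 'n::finite sa \<Rightarrow> 'n \<Rightarrow> nat) \<in> measurable borel (count_space UNIV)"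
proof (subst measurable_count_space_eq2_countable, intro conjI ballI)
  fix a :: "'n \<Rightarrow> nat"
  have "continuous_on UNIV ((\<lambda>f::'n \<Rightarrow> nat. f i) \<circ> snd)" for i
    by (intro continuous_on_compose continuous_on_snd continuous_on_id) simp
  then have "(\<lambda>x::'n sa. snd x i) \<in> borel_measurable borel" for i
    using borel_measurable_continuous_onI by (force simp: o_def)
  then have "{x::'n sa. snd x i = a i} \<in> sets borel" for i
    using measurable_sets[of _ borel borel "{a i}"] by (simp add: vimage_def)
  then have "(\<Inter>i. {x::'n sa. snd x i = a i}) \<in> sets borel"
    by (intro sets.countable_INT) auto
  moreover have "snd -` {a} = (\<Inter>i. {x::'n sa. snd x i = a i})"
    by auto
  ultimately show "snd -` {a} \<inter> space borel \<in> sets (borel :: 'n sa measure)"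
    by simp
qed simp

lemma borel_measurable_fst_sa[measurable]: "(fst :: 'n::finite sa \<Rightarrow> real) \<in> borel_measurable borel"
  by (intro borel_measurable_continuous_onI continuous_on_fst continuous_on_id)

type_synonym 'n tree = "('n \<times> nat) list \<Rightarrow> 'n sa"

abbreviation tree_borel :: "'n::finite tree measure" where
  "tree_borel \<equiv> PiM UNIV (\<lambda>_. borel)"

definition subtree :: "'n \<times> nat \<Rightarrow> (('n \<times> nat) list \<Rightarrow> 'a) \<Rightarrow> ('n \<times> nat) list \<Rightarrow> 'a" where
  "subtree p \<omega> = (\<lambda>w. \<omega> (p # w))"

definition graft :: "'a \<times> ('n \<times> nat \<Rightarrow> ('n \<times> nat) list \<Rightarrow> 'a) \<Rightarrow> ('n \<times> nat) list \<Rightarrow> 'a" where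
  "graft z u = (case u of [] \<Rightarrow> fst z | p # w \<Rightarrow> snd z p w)"

lemma graft_Nil[simp]: "graft z [] = fst z"
  by (simp add: graft_def)

lemma graft_Cons[simp]: "graft z (p # w) = snd z p w"
  by (simp add: graft_def)

lemma subtree_graft[simp]: "subtree p (graft z) = snd z p"
  by (simp add: subtree_def fun_eq_iff)

lemma space_tree_borel[simp]: "space tree_borel = UNIV"
  by (simp add: space_PiM PiE_def extensional_def)

lemma measurable_subtree[measurable]: "subtree p \<in> measurable tree_borel tree_borel"
  unfolding subtree_def by (rule measurable_PiM_single') auto

lemma measurable_tree_label[measurable]: "(\<lambda>\<omega>. \<omega> u) \<in> measurable tree_borel borel"
  by simp

lemma measurable_tree_arrivals[measurable]:
  "(\<lambda>\<omega>::'n::finite tree. snd (\<omega> u)) \<in> measurable tree_borel (count_space UNIV)"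
  by simp

definition gw_marginal :: "'n sa measure \<Rightarrow> ('n \<Rightarrow> 'n sa measure) \<Rightarrow> ('n \<times> nat) list \<Rightarrow> 'n sa measure" where
  "gw_marginal V J u = (if u = [] then V else J (fst (last u)))"

lemma gw_space_eq_PiM: "gw_space V J = PiM UNIV (gw_marginal V J)"
  by (simp add: gw_space_def gw_marginal_def[abs_def])

lemma gw_marginal_Cons: "gw_marginal V J (p # w) = gw_marginal (J (fst p)) J w"
  by (simp add: gw_marginal_def)

locale multitype_gw =
  fixes J :: "'n::finite \<Rightarrow> 'n sa measure"
  assumes prob_space_J: "\<And>i. prob_space (J i)"
    and sets_J: "\<And>i. sets (J i) = sets borel"
begin

abbreviation gw_tree :: "'n \<Rightarrow> 'n tree measure" where
  "gw_tree j \<equiv> gw_space (J j) J"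

abbreviation subtrees :: "('n \<times> nat \<Rightarrow> 'n tree) measure" where
  "subtrees \<equiv> PiM UNIV (\<lambda>p. gw_tree (fst p))"

lemma space_J[simp]: "space (J i) = UNIV"
  using sets_eq_imp_space_eq[OF sets_J[of i]] by simp

lemma measurable_J[simp]: "measurable (J i) M = measurable borel M"
  by (rule measurable_cong_sets[OF sets_J refl])

context
  fixes V :: "'n sa measure"
  assumes sets_V: "sets V = sets borel"
begin

lemma sets_gw_marginal: "sets (gw_marginal V J u) = sets borel"
  by (simp add: gw_marginal_def sets_J sets_V)

lemma space_gw_marginal: "space (gw_marginal V J u) = UNIV"
  using sets_eq_imp_space_eq[OF sets_gw_marginal] by simp

lemma sets_gw_space: "sets (gw_space V J) = sets tree_borel"
  unfolding gw_space_eq_PiM by (intro sets_PiM_cong) (auto simp: sets_gw_marginal)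

lemma measurable_gw_space[simp]: "measurable (gw_space V J) M = measurable tree_borel M"
  by (rule measurable_cong_sets[OF sets_gw_space refl])

lemma measurable_into_gw_space[simp]: "measurable M (gw_space V J) = measurable M tree_borel"
  by (rule measurable_cong_sets[OF refl sets_gw_space])

lemma space_gw_space[simp]: "space (gw_space V J) = UNIV"
  using sets_eq_imp_space_eq[OF sets_gw_space] by simp

end

lemma prob_space_gw_marginal: "prob_space V \<Longrightarrow> prob_space (gw_marginal V J u)"
  by (simp add: gw_marginal_def prob_space_J)

lemma prob_space_gw_space: "prob_space V \<Longrightarrow> prob_space (gw_space V J)"
  unfolding gw_space_eq_PiM by (intro prob_space_PiM prob_space_gw_marginal)

lemma measurable_gw_tree[simp]: "measurable (gw_tree j) M = measurable tree_borel M"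
  by (rule measurable_gw_space[OF sets_J])

lemma space_gw_tree[simp]: "space (gw_tree j) = UNIV"
  by (rule space_gw_space[OF sets_J])

lemma space_subtrees[simp]: "space subtrees = UNIV"
  by (simp add: space_PiM PiE_def extensional_def)

lemma prob_space_subtrees: "prob_space subtrees"
  by (intro prob_space_PiM prob_space_gw_space prob_space_J)

lemma measurable_graft:
  assumes "sets V = sets borel"
  shows "graft \<in> measurable (V \<Otimes>\<^sub>M subtrees) tree_borel"
proof (rule measurable_PiM_single')
  fix u :: "('n \<times> nat) list"
  show "(\<lambda>z. graft z u) \<in> borel_measurable (V \<Otimes>\<^sub>M subtrees)"
  proof (cases u)
    case Nil
    have "fst \<in> measurable (V \<Otimes>\<^sub>M subtrees) V"
      by (rule measurable_fst)
    then have "fst \<in> measurable (V \<Otimes>\<^sub>M subtrees) borel"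
      using measurable_cong_sets[OF refl assms] by blast
    then show ?thesis
      using Nil by simp
  next
    case (Cons p w)
    have "(\<lambda>z. snd z p) \<in> measurable (V \<Otimes>\<^sub>M subtrees) (gw_tree (fst p))"
      by (rule measurable_compose[OF measurable_snd measurable_component_singleton]) simp
    then have "(\<lambda>z. snd z p) \<in> measurable (V \<Otimes>\<^sub>M subtrees) tree_borel"
      by (simp add: measurable_into_gw_space[OF sets_J])
    then show ?thesis
      using Cons by simp
  qed
qed (simp add: PiE_def extensional_def)

end

section \<open>The branching property\<close>

lemma borel_measurable_root_subtrees:
  fixes h :: "'n::finite sa \<Rightarrow> ennreal" and g :: "'n \<Rightarrow> 'n tree \<Rightarrow> ennreal"
  assumes "h \<in> borel_measurable borel" and "\<And>j. g j \<in> borel_measurable tree_borel"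
  shows "(\<lambda>\<omega>. h (\<omega> []) * (\<Prod>j\<in>UNIV. \<Prod>m<snd (\<omega> []) j. g j (subtree (j, m) \<omega>)))
    \<in> borel_measurable tree_borel"
proof -
  have "(\<lambda>\<omega>. h (\<omega> []) * (\<Prod>j\<in>UNIV. \<Prod>m<a j. g j (subtree (j, m) \<omega>))) \<in> borel_measurable tree_borel"
    for a :: "'n \<Rightarrow> nat"
    using assms by measurable
  then show ?thesis
    by (rule measurable_compose_countable[OF _ measurable_tree_arrivals])
qed

context multitype_gw
begin

lemma subtrees_cylinder:
  assumes "finite K" and A: "\<And>u. u \<in> K \<Longrightarrow> A u \<in> sets borel"
  defines "D \<equiv> {\<tau>. \<forall>p w. p # w \<in> K \<longrightarrow> \<tau> p w \<in> A (p # w)}"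
  shows "D \<in> sets subtrees"
    and "emeasure subtrees D = (\<Prod>p\<in>{p. \<exists>w. p # w \<in> K}. \<Prod>w\<in>{w. p # w \<in> K}.
      emeasure (gw_marginal (J (fst p)) J w) (A (p # w)))"
proof -
  define E where "E p = {\<sigma>. \<forall>w\<in>{w. p # w \<in> K}. \<sigma> w \<in> A (p # w)}" for p
  have D_eq: "D = {\<tau>. \<forall>p\<in>{p. \<exists>w. p # w \<in> K}. \<tau> p \<in> E p}"
    by (auto simp: D_def E_def)
  have E_sets: "E p \<in> sets (gw_tree (fst p))" for p
    unfolding E_def gw_space_eq_PiM
    by (rule sets_PiM_cylinder)
      (auto simp: space_gw_marginal[OF sets_J] sets_gw_marginal[OF sets_J] finite_Cons_tails assms)
  show "D \<in> sets subtrees"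
    unfolding D_eq by (rule sets_PiM_cylinder) (auto simp: finite_Cons_heads assms E_sets)
  have "emeasure subtrees D = (\<Prod>p\<in>{p. \<exists>w. p # w \<in> K}. emeasure (gw_tree (fst p)) (E p))"
    unfolding D_eq
    by (rule emeasure_PiM_cylinder) (auto simp: prob_space_gw_space prob_space_J finite_Cons_heads assms E_sets)
  also have "\<dots> = (\<Prod>p\<in>{p. \<exists>w. p # w \<in> K}. \<Prod>w\<in>{w. p # w \<in> K}.
      emeasure (gw_marginal (J (fst p)) J w) (A (p # w)))"
    unfolding E_def gw_space_eq_PiM
    by (intro prod.cong refl emeasure_PiM_cylinder)
      (auto simp: prob_space_gw_marginal prob_space_J space_gw_marginal[OF sets_J]
        sets_gw_marginal[OF sets_J] finite_Cons_tails assms)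
  finally show "emeasure subtrees D = \<dots>" .
qed

lemma distr_graft_gw_space:
  assumes prob_V: "prob_space V" and sets_V: "sets V = sets borel"
  shows "distr (V \<Otimes>\<^sub>M subtrees) (gw_space V J) graft = gw_space V J"
proof (rule measure_eqI_PiM_infinite[symmetric, where I=UNIV and M="gw_marginal V J"])
  interpret V: prob_space V by fact
  interpret T: prob_space subtrees by (rule prob_space_subtrees)
  show "sets (gw_space V J) = sets (PiM UNIV (gw_marginal V J))"
    and "sets (distr (V \<Otimes>\<^sub>M subtrees) (gw_space V J) graft) = sets (PiM UNIV (gw_marginal V J))"
    by (simp_all add: gw_space_eq_PiM)
  show "finite_measure (gw_space V J)"
    using prob_space_gw_space[OF prob_V] by (simp add: prob_space_def)
  fix A K
  assume K: "finite K" and A: "\<And>u. u \<in> K \<Longrightarrow> A u \<in> sets (gw_marginal V J u)"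
  have A_borel: "A u \<in> sets borel" if "u \<in> K" for u
    using A[OF that] by (simp add: sets_gw_marginal[OF sets_V])
  define A0 where "A0 = (if [] \<in> K then A [] else UNIV)"
  define D where "D = {\<tau>. \<forall>p w. p # w \<in> K \<longrightarrow> \<tau> p w \<in> A (p # w)}"
  define C where "C = {f. \<forall>u\<in>K. f u \<in> A u}"
  have C_eq: "prod_emb UNIV (gw_marginal V J) K (Pi\<^sub>E K A) = C"
    unfolding C_def by (rule prod_emb_UNIV_PiE) (rule space_gw_marginal[OF sets_V])
  have C_sets: "C \<in> sets (gw_space V J)"
    using C_eq sets_PiM_I[of K UNIV A "gw_marginal V J"] A K by (simp add: gw_space_eq_PiM)
  have "graft -` C \<inter> space (V \<Otimes>\<^sub>M subtrees) = A0 \<times> D"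
    by (auto simp: C_def A0_def D_def space_pair_measure ball_lists_Nil_Cons sets_eq_imp_space_eq[OF sets_V])
  then have "emeasure (distr (V \<Otimes>\<^sub>M subtrees) (gw_space V J) graft) C = emeasure V A0 * emeasure subtrees D"
    using C_sets subtrees_cylinder[OF K A_borel] A_borel
    by (simp add: emeasure_distr measurable_graft[OF sets_V] sets_V A0_def D_def T.emeasure_pair_measure_Times)
  also have "emeasure V A0 = (if [] \<in> K then emeasure (gw_marginal V J []) (A []) else 1)"
    using V.emeasure_space_1 by (simp add: A0_def gw_marginal_def sets_eq_imp_space_eq[OF sets_V])
  also have "emeasure subtrees D = (\<Prod>p\<in>{p. \<exists>w. p # w \<in> K}. \<Prod>w\<in>{w. p # w \<in> K}.
      emeasure (gw_marginal V J (p # w)) (A (p # w)))"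
    unfolding D_def gw_marginal_Cons by (rule subtrees_cylinder(2)[OF K A_borel])
  also have "(if [] \<in> K then emeasure (gw_marginal V J []) (A []) else 1) * \<dots>
      = (\<Prod>u\<in>K. emeasure (gw_marginal V J u) (A u))"
    by (rule prod_lists_Nil_Cons[OF K, of "\<lambda>u. emeasure (gw_marginal V J u) (A u)", symmetric])
  also have "\<dots> = emeasure (gw_space V J) C"
    unfolding C_eq[symmetric] gw_space_eq_PiM
    using K A by (intro emeasure_PiM_emb[symmetric] prob_space_gw_marginal prob_V) auto
  finally show "emeasure (gw_space V J) (prod_emb UNIV (gw_marginal V J) K (Pi\<^sub>E K A)) =
      emeasure (distr (V \<Otimes>\<^sub>M subtrees) (gw_space V J) graft) (prod_emb UNIV (gw_marginal V J) K (Pi\<^sub>E K A))"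
    by (simp add: C_eq)
qed

lemma nn_integral_subtrees_prod:
  fixes g :: "'n \<Rightarrow> 'n tree \<Rightarrow> ennreal" and a :: "'n \<Rightarrow> nat"
  assumes g: "\<And>j. g j \<in> borel_measurable tree_borel"
  shows "(\<integral>\<^sup>+\<tau>. (\<Prod>j\<in>UNIV. \<Prod>m<a j. g j (\<tau> (j, m))) \<partial>subtrees) = (\<Prod>j\<in>UNIV. (\<integral>\<^sup>+\<omega>. g j \<omega> \<partial>gw_tree j) ^ a j)"
proof -
  interpret T: product_prob_space "\<lambda>p::'n \<times> nat. gw_tree (fst p)" UNIV
    by (simp add: product_prob_space_def product_sigma_finite_def product_prob_space_axioms_def
        prob_space_gw_space prob_space_J prob_space_imp_sigma_finite)
  define S where "S = Sigma (UNIV :: 'n set) (\<lambda>j. {..<a j})"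
  have S: "finite S"
    unfolding S_def by auto
  have "(\<integral>\<^sup>+\<tau>. (\<Prod>j\<in>UNIV. \<Prod>m<a j. g j (\<tau> (j, m))) \<partial>subtrees) =
      (\<integral>\<^sup>+\<tau>. (\<Prod>p\<in>S. g (fst p) (restrict \<tau> S p)) \<partial>subtrees)"
    unfolding S_def by (subst prod.Sigma) (auto simp: case_prod_beta intro!: nn_integral_cong prod.cong)
  also have "\<dots> = (\<integral>\<^sup>+y. (\<Prod>p\<in>S. g (fst p) (y p)) \<partial>distr subtrees (PiM S (\<lambda>p. gw_tree (fst p))) (\<lambda>\<tau>. restrict \<tau> S))"
  proof (rule nn_integral_distr[symmetric])
    show "(\<lambda>\<tau>. restrict \<tau> S) \<in> measurable subtrees (PiM S (\<lambda>p. gw_tree (fst p)))"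
      by (rule measurable_restrict_subset) simp
    have "(\<lambda>y. \<Prod>p\<in>S. g (fst p) (y p)) \<in> borel_measurable (PiM S (\<lambda>p. gw_tree (fst p)))"
    proof (rule borel_measurable_prod_ennreal)
      fix p assume "p \<in> S"
      have "g (fst p) \<in> borel_measurable (gw_tree (fst p))"
        using g by simp
      then show "(\<lambda>y. g (fst p) (y p)) \<in> borel_measurable (PiM S (\<lambda>p. gw_tree (fst p)))"
        by (rule measurable_compose[OF measurable_component_singleton[OF \<open>p \<in> S\<close>]])
    qed
    then show "(\<lambda>y. \<Prod>p\<in>S. g (fst p) (y p))
        \<in> borel_measurable (distr subtrees (PiM S (\<lambda>p. gw_tree (fst p))) (\<lambda>\<tau>. restrict \<tau> S))"
      by simp
  qed
  also have "distr subtrees (PiM S (\<lambda>p. gw_tree (fst p))) (\<lambda>\<tau>. restrict \<tau> S) = PiM S (\<lambda>p. gw_tree (fst p))"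
    by (rule T.distr_PiM_restrict_finite[OF S]) simp
  also have "(\<integral>\<^sup>+y. (\<Prod>p\<in>S. g (fst p) (y p)) \<partial>PiM S (\<lambda>p. gw_tree (fst p))) =
      (\<Prod>p\<in>S. \<integral>\<^sup>+\<omega>. g (fst p) \<omega> \<partial>gw_tree (fst p))"
    using g by (intro T.product_nn_integral_prod[OF S]) simp
  also have "\<dots> = (\<Prod>j\<in>UNIV. (\<integral>\<^sup>+\<omega>. g j \<omega> \<partial>gw_tree j) ^ a j)"
    unfolding S_def by (simp add: prod_power_eq_prod_Sigma)
  finally show ?thesis .
qed

lemma nn_integral_gw_branching:
  fixes h :: "'n sa \<Rightarrow> ennreal" and g :: "'n \<Rightarrow> 'n tree \<Rightarrow> ennreal"
  assumes prob_V: "prob_space V" and sets_V: "sets V = sets borel"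
    and h: "h \<in> borel_measurable borel" and g: "\<And>j. g j \<in> borel_measurable tree_borel"
  shows "(\<integral>\<^sup>+\<omega>. h (\<omega> []) * (\<Prod>j\<in>UNIV. \<Prod>m<snd (\<omega> []) j. g j (subtree (j, m) \<omega>)) \<partial>gw_space V J)
       = (\<integral>\<^sup>+x. h x * (\<Prod>j\<in>UNIV. (\<integral>\<^sup>+\<omega>. g j \<omega> \<partial>gw_tree j) ^ snd x j) \<partial>V)"
proof -
  interpret T: prob_space subtrees by (rule prob_space_subtrees)
  define F where "F \<omega> = h (\<omega> []) * (\<Prod>j\<in>UNIV. \<Prod>m<snd (\<omega> []) j. g j (subtree (j, m) \<omega>))" for \<omega>
  have F: "F \<in> borel_measurable tree_borel"
    unfolding F_def by (rule borel_measurable_root_subtrees[OF h g])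
  have graft: "graft \<in> measurable (V \<Otimes>\<^sub>M subtrees) (gw_space V J)"
    using measurable_graft[OF sets_V] sets_V by simp
  have "(\<integral>\<^sup>+\<omega>. F \<omega> \<partial>gw_space V J) = (\<integral>\<^sup>+z. F (graft z) \<partial>(V \<Otimes>\<^sub>M subtrees))"
    using F sets_V by (subst distr_graft_gw_space[OF prob_V sets_V, symmetric]) (simp add: nn_integral_distr[OF graft])
  also have "\<dots> = (\<integral>\<^sup>+x. \<integral>\<^sup>+\<tau>. F (graft (x, \<tau>)) \<partial>subtrees \<partial>V)"
    using measurable_compose[OF graft] F sets_V by (intro T.nn_integral_fst[symmetric]) simp
  also have "\<dots> = (\<integral>\<^sup>+x. h x * (\<Prod>j\<in>UNIV. (\<integral>\<^sup>+\<omega>. g j \<omega> \<partial>gw_tree j) ^ snd x j) \<partial>V)"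
  proof (rule nn_integral_cong)
    fix x :: "'n sa"
    have comp: "(\<lambda>\<tau>. g j (\<tau> (j, m))) \<in> borel_measurable subtrees" for j m
    proof -
      have "g j \<in> borel_measurable (gw_tree j)"
        using g by simp
      then show ?thesis
        using measurable_compose[OF measurable_component_singleton[of "(j, m)" UNIV "\<lambda>p. gw_tree (fst p)", simplified]]
        by blast
    qed
    have "(\<lambda>\<tau>. \<Prod>j\<in>UNIV. \<Prod>m<snd x j. g j (\<tau> (j, m))) \<in> borel_measurable subtrees"
      by (intro borel_measurable_prod_ennreal comp)
    then have "(\<integral>\<^sup>+\<tau>. F (graft (x, \<tau>)) \<partial>subtrees) = h x * (\<integral>\<^sup>+\<tau>. (\<Prod>j\<in>UNIV. \<Prod>m<snd x j. g j (\<tau> (j, m))) \<partial>subtrees)"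
      unfolding F_def by (simp add: nn_integral_cmult)
    then show "(\<integral>\<^sup>+\<tau>. F (graft (x, \<tau>)) \<partial>subtrees) = h x * (\<Prod>j\<in>UNIV. (\<integral>\<^sup>+\<omega>. g j \<omega> \<partial>gw_tree j) ^ snd x j)"
      by (simp add: nn_integral_subtrees_prod[OF g])
  qed
  finally show ?thesis
    by (simp add: F_def)
qed

end

section \<open>The busy period\<close>

lemma lt_enn_ennreal: "lt_enn \<theta> (ennreal r) = exp (- \<theta> * max 0 r)"
  by (cases "0 \<le> r") (auto simp: lt_enn_def max_def ennreal_neg)

lemma lt_enn_zero[simp]: "lt_enn \<theta> 0 = 1"
  by (simp add: lt_enn_def)

lemma lt_enn_nonneg[simp]: "0 \<le> lt_enn \<theta> x"
  by (simp add: lt_enn_def)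

lemma lt_enn_le_1: "0 \<le> \<theta> \<Longrightarrow> lt_enn \<theta> x \<le> 1"
  by (simp add: lt_enn_def)

lemma lt_enn_eq_0_iff: "lt_enn \<theta> x = 0 \<longleftrightarrow> x = \<top>"
  by (simp add: lt_enn_def)

lemma lt_enn_add: "lt_enn \<theta> (a + b) = lt_enn \<theta> a * lt_enn \<theta> b"
proof (cases "a = \<top> \<or> b = \<top>")
  case False
  then obtain r s where "a = ennreal r" "0 \<le> r" "b = ennreal s" "0 \<le> s"
    by (metis ennreal_cases)
  moreover have "exp (- \<theta> * (r + s)) = exp (- \<theta> * r) * exp (- \<theta> * s)"
    by (simp add: exp_add[symmetric] algebra_simps)
  ultimately show ?thesis
    by (simp add: lt_enn_def ennreal_plus[symmetric] del: ennreal_plus)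
qed (auto simp: lt_enn_def)

lemma lt_enn_sum: "finite S \<Longrightarrow> lt_enn \<theta> (\<Sum>i\<in>S. x i) = (\<Prod>i\<in>S. lt_enn \<theta> (x i))"
  by (induction S rule: finite_induct) (auto simp: lt_enn_add)

lemma borel_measurable_lt_enn[measurable]: "lt_enn \<theta> \<in> borel_measurable borel"
  unfolding lt_enn_def by measurable

lemma gw_node_Nil[simp]: "gw_node \<omega> []"
  by (simp add: gw_node_def)

lemma gw_node_Cons: "gw_node \<omega> (p # w) \<longleftrightarrow> snd p < snd (\<omega> []) (fst p) \<and> gw_node (subtree p \<omega>) w"
  unfolding gw_node_def subtree_def by (simp add: All_less_Suc2)

lemma measurable_gw_node[measurable]:
  "Measurable.pred tree_borel (\<lambda>\<omega>::'n::finite tree. gw_node \<omega> u)"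
proof -
  have "Measurable.pred tree_borel (\<lambda>\<omega>::'n tree. c < snd (\<omega> v) i)" for c v i
    using measurable_compose[OF measurable_tree_arrivals measurable_count_space[of "\<lambda>a. c < a i" UNIV]] .
  then have "Measurable.pred tree_borel
      (\<lambda>\<omega>::'n tree. \<forall>m\<in>{..<length u}. snd (u ! m) < snd (\<omega> (take m u)) (fst (u ! m)))"
    by (intro pred_intros_finite) auto
  moreover have "(\<lambda>\<omega>::'n tree. gw_node \<omega> u) =
      (\<lambda>\<omega>. \<forall>m\<in>{..<length u}. snd (u ! m) < snd (\<omega> (take m u)) (fst (u ! m)))"
    by (auto simp: gw_node_def)
  ultimately show ?thesis
    by (simp only:)
qed

lemma borel_measurable_busy[measurable]: "busy \<in> borel_measurable (tree_borel :: 'n::finite tree measure)"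
proof -
  define e where "e = from_nat_into (UNIV :: ('n \<times> nat) list set)"
  have "bij_betw e UNIV UNIV"
    unfolding e_def by (rule bij_betw_from_nat_into) (auto simp: infinite_UNIV_listI)
  then have "busy \<omega> = (\<Sum>n. if gw_node \<omega> (e n) then ennreal (fst (\<omega> (e n))) else 0)" for \<omega> :: "'n tree"
    unfolding busy_def
    using nn_integral_bij_count_space[of e UNIV UNIV "\<lambda>u. if gw_node \<omega> u then ennreal (fst (\<omega> u)) else 0"]
    by (simp add: nn_integral_count_space_nat)
  then have eq: "busy = (\<lambda>\<omega>::'n tree. \<Sum>n. if gw_node \<omega> (e n) then ennreal (fst (\<omega> (e n))) else 0)"
    by (simp add: fun_eq_iff)
  show ?thesis
    unfolding eq by (intro borel_measurable_suminf_order) measurable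
qed

lemma busy_root_subtrees:
  fixes \<omega> :: "'n::finite tree"
  shows "busy \<omega> = ennreal (fst (\<omega> [])) + (\<Sum>j\<in>UNIV. \<Sum>m<snd (\<omega> []) j. busy (subtree (j, m) \<omega>))"
proof -
  define f where "f u = (if gw_node \<omega> u then ennreal (fst (\<omega> u)) else 0)" for u
  define a where "a = snd (\<omega> [])"
  interpret C: sigma_finite_measure "count_space (UNIV :: ('n \<times> nat) list set)"
    by (rule sigma_finite_measure_count_space_countable) simp
  have "busy \<omega> = (\<integral>\<^sup>+u. f u * indicator {[]} u \<partial>count_space UNIV) +
      (\<integral>\<^sup>+u. f u * indicator (UNIV - {[]}) u \<partial>count_space UNIV)"
    unfolding busy_def f_def
    by (subst nn_integral_add[symmetric]) (auto intro!: nn_integral_cong split: split_indicator)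
  also have "(\<integral>\<^sup>+u. f u * indicator {[]} u \<partial>count_space UNIV) = ennreal (fst (\<omega> []))"
    by (simp add: nn_integral_count_space_indicator[symmetric] nn_integral_count_space_finite f_def)
  also have "(\<integral>\<^sup>+u. f u * indicator (UNIV - {[]}) u \<partial>count_space UNIV) = (\<integral>\<^sup>+u. f u \<partial>count_space (UNIV - {[]}))"
    by (simp add: nn_integral_count_space_indicator)
  also have "\<dots> = (\<integral>\<^sup>+z. f (fst z # snd z) \<partial>count_space UNIV)"
    by (rule nn_integral_bij_count_space[symmetric]) (rule bij_betwI[where g="\<lambda>u. (hd u, tl u)"], auto)
  also have "\<dots> = (\<integral>\<^sup>+z. f (fst z # snd z) \<partial>(count_space UNIV \<Otimes>\<^sub>M count_space UNIV))"
    by (simp add: pair_measure_countable)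
  also have "\<dots> = (\<integral>\<^sup>+p. \<integral>\<^sup>+w. f (p # w) \<partial>count_space UNIV \<partial>count_space UNIV)"
    by (subst C.nn_integral_fst[symmetric]) (simp_all add: pair_measure_countable)
  also have "\<dots> = (\<integral>\<^sup>+p. (if snd p < a (fst p) then busy (subtree p \<omega>) else 0) \<partial>count_space UNIV)"
    by (rule nn_integral_cong) (simp add: f_def gw_node_Cons busy_def a_def subtree_def)
  also have "\<dots> = (\<Sum>p\<in>Sigma UNIV (\<lambda>j. {..<a j}). if snd p < a (fst p) then busy (subtree p \<omega>) else 0)"
    by (rule nn_integral_count_space') auto
  also have "\<dots> = (\<Sum>p\<in>Sigma UNIV (\<lambda>j. {..<a j}). busy (subtree p \<omega>))"
    by (rule sum.cong) auto
  also have "\<dots> = (\<Sum>j\<in>UNIV. \<Sum>m<a j. busy (subtree (j, m) \<omega>))"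
    by (subst sum.Sigma) auto
  finally show ?thesis
    by (simp add: a_def)
qed

text \<open>The factor contributed by a node with label x; busy counts negative durations as 0.\<close>

definition node_discount :: "real \<Rightarrow> 'n sa \<Rightarrow> real" where
  "node_discount \<theta> x = exp (- \<theta> * max 0 (fst x))"

lemma node_discount_nonneg[simp]: "0 \<le> node_discount \<theta> x"
  by (simp add: node_discount_def)

lemma borel_measurable_node_discount[measurable]:
  "node_discount \<theta> \<in> borel_measurable (borel :: 'n::finite sa measure)"
  unfolding node_discount_def[abs_def] by measurable

lemma lt_enn_busy_root_subtrees:
  fixes \<omega> :: "'n::finite tree"
  shows "lt_enn \<theta> (busy \<omega>) =
    node_discount \<theta> (\<omega> []) * (\<Prod>j\<in>UNIV. \<Prod>m<snd (\<omega> []) j. lt_enn \<theta> (busy (subtree (j, m) \<omega>)))"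
  by (simp only: busy_root_subtrees[of \<omega>]) (simp add: lt_enn_add lt_enn_sum lt_enn_ennreal node_discount_def)

lemma busy_transform_nonneg: "0 \<le> busy_transform V J \<theta>"
  unfolding busy_transform_def by (rule integral_nonneg_AE) simp

context multitype_gw
begin

lemma busy_transform_eq_nn_integral:
  assumes "0 \<le> \<theta>" and prob_V: "prob_space V" and sets_V: "sets V = sets borel"
  shows "ennreal (busy_transform V J \<theta>) = (\<integral>\<^sup>+\<omega>. ennreal (lt_enn \<theta> (busy \<omega>)) \<partial>gw_space V J)"
proof -
  interpret T: prob_space "gw_space V J"
    by (rule prob_space_gw_space[OF prob_V])
  have "integrable (gw_space V J) (\<lambda>\<omega>. lt_enn \<theta> (busy \<omega>))"
    using assms by (intro T.integrable_const_bound[where B=1]) (simp_all add: lt_enn_le_1)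
  then show ?thesis
    unfolding busy_transform_def by (simp add: nn_integral_eq_integral)
qed

lemma busy_transform_branching:
  assumes "0 \<le> \<theta>" and prob_V: "prob_space V" and sets_V: "sets V = sets borel"
    and nonneg_V: "AE x in V. 0 \<le> fst x"
  shows "ennreal (busy_transform V J \<theta>) = sa_transform V \<theta> (\<lambda>j. busy_transform (J j) J \<theta>)"
proof -
  have root: "ennreal (lt_enn \<theta> (busy \<omega>)) = ennreal (node_discount \<theta> (\<omega> [])) *
      (\<Prod>j\<in>UNIV. \<Prod>m<snd (\<omega> []) j. ennreal (lt_enn \<theta> (busy (subtree (j, m) \<omega>))))" for \<omega> :: "'n tree"
    using lt_enn_busy_root_subtrees[of \<theta> \<omega>] by (simp add: ennreal_mult prod_nonneg ennreal_prod_prod)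
  have "ennreal (busy_transform V J \<theta>) = (\<integral>\<^sup>+\<omega>. ennreal (lt_enn \<theta> (busy \<omega>)) \<partial>gw_space V J)"
    by (rule busy_transform_eq_nn_integral[OF assms(1-3)])
  also have "\<dots> = (\<integral>\<^sup>+\<omega>. ennreal (node_discount \<theta> (\<omega> [])) *
      (\<Prod>j\<in>UNIV. \<Prod>m<snd (\<omega> []) j. ennreal (lt_enn \<theta> (busy (subtree (j, m) \<omega>)))) \<partial>gw_space V J)"
    by (rule nn_integral_cong) (rule root)
  also have "\<dots> = (\<integral>\<^sup>+x. ennreal (node_discount \<theta> x) *
      (\<Prod>j\<in>UNIV. (\<integral>\<^sup>+\<omega>. ennreal (lt_enn \<theta> (busy \<omega>)) \<partial>gw_tree j) ^ snd x j) \<partial>V)"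
    by (rule nn_integral_gw_branching[OF prob_V sets_V]) simp_all
  also have "\<dots> = sa_transform V \<theta> (\<lambda>j. busy_transform (J j) J \<theta>)"
  proof -
    have b: "(\<integral>\<^sup>+\<omega>. ennreal (lt_enn \<theta> (busy \<omega>)) \<partial>gw_tree j) = ennreal (busy_transform (J j) J \<theta>)" for j
      using busy_transform_eq_nn_integral[OF \<open>0 \<le> \<theta>\<close> prob_space_J sets_J] by simp
    have "AE x in V. ennreal (node_discount \<theta> x) *
        (\<Prod>j\<in>UNIV. (\<integral>\<^sup>+\<omega>. ennreal (lt_enn \<theta> (busy \<omega>)) \<partial>gw_tree j) ^ snd x j) =
        ennreal (exp (- \<theta> * fst x) * (\<Prod>j\<in>UNIV. busy_transform (J j) J \<theta> ^ snd x j))"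
      using nonneg_V
      by eventually_elim (auto simp: b node_discount_def max_def ennreal_mult prod_nonneg busy_transform_nonneg
          prod_ennreal ennreal_power)
    then show ?thesis
      unfolding sa_transform_def by (rule nn_integral_cong_AE)
  qed
  finally show ?thesis .
qed

end

section \<open>Truncated trees\<close>

fun trunc_weight :: "('n sa \<Rightarrow> real) \<Rightarrow> ('n \<Rightarrow> real) \<Rightarrow> nat \<Rightarrow> 'n \<Rightarrow> 'n tree \<Rightarrow> real" where
  "trunc_weight w s 0 j \<omega> = s j"
| "trunc_weight w s (Suc k) j \<omega> =
    w (\<omega> []) * (\<Prod>i\<in>UNIV. \<Prod>m<snd (\<omega> []) i. trunc_weight w s k i (subtree (i, m) \<omega>))"

fun height_less :: "nat \<Rightarrow> 'n tree \<Rightarrow> bool" where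
  "height_less 0 \<omega> = False"
| "height_less (Suc k) \<omega> = (\<forall>i. \<forall>m<snd (\<omega> []) i. height_less k (subtree (i, m) \<omega>))"

lemma height_less_Suc: "height_less k \<omega> \<Longrightarrow> height_less (Suc k) \<omega>"
  by (induction k arbitrary: \<omega>) auto

lemma measurable_height_less[measurable]:
  "Measurable.pred tree_borel (height_less k :: 'n::finite tree \<Rightarrow> bool)"
proof (induction k)
  case (Suc k)
  have "Measurable.pred tree_borel (\<lambda>\<omega>::'n tree. \<forall>i. \<forall>m<a i. height_less k (subtree (i, m) \<omega>))"
    for a :: "'n \<Rightarrow> nat"
  proof -
    have "Measurable.pred tree_borel (\<lambda>\<omega>::'n tree. \<forall>i\<in>UNIV. \<forall>m\<in>{..<a i}. height_less k (subtree (i, m) \<omega>))"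
      by (intro pred_intros_finite measurable_compose[OF measurable_subtree Suc.IH]) auto
    moreover have "(\<lambda>\<omega>::'n tree. \<forall>i\<in>UNIV. \<forall>m\<in>{..<a i}. height_less k (subtree (i, m) \<omega>)) =
        (\<lambda>\<omega>. \<forall>i. \<forall>m<a i. height_less k (subtree (i, m) \<omega>))"
      by auto
    ultimately show ?thesis
      by (simp only:)
  qed
  from measurable_compose_countable[OF this measurable_tree_arrivals[of "[]"]]
  show ?case
    by (simp add: fun_eq_iff)
qed simp

lemma borel_measurable_trunc_weight[measurable]:
  assumes w: "w \<in> borel_measurable borel"
  shows "trunc_weight w s k j \<in> borel_measurable (tree_borel :: 'n::finite tree measure)"
proof (induction k arbitrary: j)
  case (Suc k)
  have "(\<lambda>\<omega>::'n tree. w (\<omega> []) * (\<Prod>i\<in>UNIV. \<Prod>m<a i. trunc_weight w s k i (subtree (i, m) \<omega>)))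
      \<in> borel_measurable tree_borel" for a :: "'n \<Rightarrow> nat"
    by (intro borel_measurable_times borel_measurable_prod measurable_compose[OF measurable_tree_label w]
        measurable_compose[OF measurable_subtree Suc.IH])
  from measurable_compose_countable[OF this measurable_tree_arrivals[of "[]"]]
  show ?case
    by (simp add: fun_eq_iff)
next
  case 0
  have "trunc_weight w s 0 j = (\<lambda>_. s j)"
    by (rule ext) simp
  then show ?case
    by simp
qed

lemma trunc_weight_nonneg:
  assumes "\<And>x. 0 \<le> w x" "\<And>i. 0 \<le> s i"
  shows "0 \<le> trunc_weight w s k j \<omega>"
  by (induction k arbitrary: j \<omega>) (auto intro!: mult_nonneg_nonneg prod_nonneg assms)

lemma trunc_weight_le_1:
  assumes "\<And>x. 0 \<le> w x" "\<And>x. w x \<le> 1" "\<And>i. 0 \<le> s i" "\<And>i. s i \<le> 1"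
  shows "trunc_weight w s k j \<omega> \<le> 1"
  by (induction k arbitrary: j \<omega>) (auto intro!: mult_le_one prod_le_1 prod_nonneg trunc_weight_nonneg assms)

lemma trunc_weight_zero:
  fixes \<omega> :: "'n::finite tree"
  shows "trunc_weight w (\<lambda>_. 0) k j \<omega> = (if height_less k \<omega> then trunc_weight w (\<lambda>_. 1) k j \<omega> else 0)"
proof (induction k arbitrary: j \<omega>)
  case (Suc k)
  show ?case
  proof (cases "height_less (Suc k) \<omega>")
    case True
    then have "\<forall>i. \<forall>m<snd (\<omega> []) i. height_less k (subtree (i, m) \<omega>)"
      by simp
    with True show ?thesis
      by (simp add: Suc.IH)
  next
    case False
    then obtain i m where im: "m < snd (\<omega> []) i" "\<not> height_less k (subtree (i, m) \<omega>)"
      by auto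
    then have "(\<Prod>m<snd (\<omega> []) i. trunc_weight w (\<lambda>_. 0) k i (subtree (i, m) \<omega>)) = 0"
      by (intro prod_zero) (auto simp: Suc.IH intro!: bexI[of _ m])
    then have "(\<Prod>i\<in>UNIV. \<Prod>m<snd (\<omega> []) i. trunc_weight w (\<lambda>_. 0) k i (subtree (i, m) \<omega>)) = 0"
      by (intro prod_zero) auto
    with False show ?thesis
      by (simp only: trunc_weight.simps) simp
  qed
qed simp

lemma trunc_weight_eq_lt_enn_busy:
  fixes \<omega> :: "'n::finite tree"
  shows "height_less k \<omega> \<Longrightarrow> trunc_weight (node_discount \<theta>) (\<lambda>_. 1) k j \<omega> = lt_enn \<theta> (busy \<omega>)"
proof (induction k arbitrary: j \<omega>)
  case (Suc k)
  then have "\<forall>i. \<forall>m<snd (\<omega> []) i. height_less k (subtree (i, m) \<omega>)"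
    by simp
  then have "(\<Prod>i\<in>UNIV. \<Prod>m<snd (\<omega> []) i. trunc_weight (node_discount \<theta>) (\<lambda>_. 1) k i (subtree (i, m) \<omega>)) =
      (\<Prod>i\<in>UNIV. \<Prod>m<snd (\<omega> []) i. lt_enn \<theta> (busy (subtree (i, m) \<omega>)))"
    by (intro prod.cong refl) (simp add: Suc.IH)
  then show ?case
    by (simp add: lt_enn_busy_root_subtrees[of \<theta> \<omega>])
qed simp

lemma trunc_weight_node_discount_zero:
  fixes \<omega> :: "'n::finite tree"
  shows "trunc_weight (node_discount \<theta>) (\<lambda>_. 0) k j \<omega> = (if height_less k \<omega> then lt_enn \<theta> (busy \<omega>) else 0)"
  by (simp add: trunc_weight_zero trunc_weight_eq_lt_enn_busy)

lemma lt_enn_busy_le_trunc_weight: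
  fixes \<omega> :: "'n::finite tree"
  assumes "0 \<le> \<kappa>" and v: "\<And>x. node_discount \<kappa> x \<le> v x"
  shows "lt_enn \<kappa> (busy \<omega>) \<le> trunc_weight v (\<lambda>_. 1) k j \<omega>"
proof (induction k arbitrary: j \<omega>)
  case 0
  then show ?case
    using assms by (simp add: lt_enn_le_1)
next
  case (Suc k)
  have "lt_enn \<kappa> (busy \<omega>) =
      node_discount \<kappa> (\<omega> []) * (\<Prod>i\<in>UNIV. \<Prod>m<snd (\<omega> []) i. lt_enn \<kappa> (busy (subtree (i, m) \<omega>)))"
    by (rule lt_enn_busy_root_subtrees)
  also have "\<dots> \<le> v (\<omega> []) * (\<Prod>i\<in>UNIV. \<Prod>m<snd (\<omega> []) i. trunc_weight v (\<lambda>_. 1) k i (subtree (i, m) \<omega>))"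
    by (intro mult_mono v prod_mono conjI prod_nonneg lt_enn_nonneg Suc.IH)
      (auto intro: order.trans[OF lt_enn_nonneg Suc.IH] order.trans[OF node_discount_nonneg v])
  finally show ?case
    by simp
qed

lemma borel_measurable_prod_power_arrivals:
  "(\<lambda>x::'n::finite sa. \<Prod>i\<in>UNIV. (c i :: real) ^ snd x i) \<in> borel_measurable borel"
  using measurable_compose_countable[OF _ measurable_snd_sa, of "\<lambda>a x. \<Prod>i\<in>UNIV. c i ^ a i"] by simp

context multitype_gw
begin

lemma nn_integral_trunc_weight_Suc:
  assumes w: "w \<in> borel_measurable borel" "\<And>x. 0 \<le> w x" and s: "\<And>i. 0 \<le> s i"
  shows "(\<integral>\<^sup>+\<omega>. ennreal (trunc_weight w s (Suc k) j \<omega>) \<partial>gw_tree j)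
     = (\<integral>\<^sup>+x. ennreal (w x) * (\<Prod>i\<in>UNIV. (\<integral>\<^sup>+\<omega>. ennreal (trunc_weight w s k i \<omega>) \<partial>gw_tree i) ^ snd x i) \<partial>J j)"
proof -
  have "(\<integral>\<^sup>+\<omega>. ennreal (trunc_weight w s (Suc k) j \<omega>) \<partial>gw_tree j) =
     (\<integral>\<^sup>+\<omega>. ennreal (w (\<omega> [])) *
       (\<Prod>i\<in>UNIV. \<Prod>m<snd (\<omega> []) i. ennreal (trunc_weight w s k i (subtree (i, m) \<omega>))) \<partial>gw_tree j)"
    using w s trunc_weight_nonneg[of w s]
    by (intro nn_integral_cong) (simp add: ennreal_mult prod_nonneg ennreal_prod_prod)
  also have "\<dots> = (\<integral>\<^sup>+x. ennreal (w x) *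
      (\<Prod>i\<in>UNIV. (\<integral>\<^sup>+\<omega>. ennreal (trunc_weight w s k i \<omega>) \<partial>gw_tree i) ^ snd x i) \<partial>J j)"
    using w by (intro nn_integral_gw_branching prob_space_J sets_J) simp_all
  finally show ?thesis .
qed

lemma integrable_weight_prod_power:
  fixes c :: "'n \<Rightarrow> real"
  assumes "w \<in> borel_measurable borel" "\<And>x. 0 \<le> w x" "\<And>x. w x \<le> 1" "\<And>i. 0 \<le> c i" "\<And>i. c i \<le> 1"
  shows "integrable (J j) (\<lambda>x. w x * (\<Prod>i\<in>UNIV. c i ^ snd x i))"
  using assms(1) borel_measurable_prod_power_arrivals[of c]
  by (intro integrable_unit_bounded prob_space_J)
    (auto intro!: mult_le_one mult_nonneg_nonneg prod_le_1 prod_nonneg power_le_one zero_le_power assms(2-5))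

context
  fixes w :: "'n sa \<Rightarrow> real" and s :: "'n \<Rightarrow> real"
  assumes w: "w \<in> borel_measurable borel" "\<And>x. 0 \<le> w x" "\<And>x. w x \<le> 1"
    and s: "\<And>i. 0 \<le> s i" "\<And>i. s i \<le> 1"
begin

lemma integrable_trunc_weight: "integrable (gw_tree j) (trunc_weight w s k j)"
  using w s by (intro integrable_unit_bounded prob_space_gw_space prob_space_J trunc_weight_nonneg trunc_weight_le_1) simp_all

lemma integral_trunc_weight_nonneg: "0 \<le> (\<integral>\<omega>. trunc_weight w s k j \<omega> \<partial>gw_tree j)"
  using w s by (simp add: trunc_weight_nonneg)

lemma integral_trunc_weight_le_1: "(\<integral>\<omega>. trunc_weight w s k j \<omega> \<partial>gw_tree j) \<le> 1"
  using w s
  by (intro prob_space.integral_le_const[OF prob_space_gw_space[OF prob_space_J] integrable_trunc_weight])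
    (simp add: trunc_weight_le_1)

lemma integral_trunc_weight_Suc:
  "(\<integral>\<omega>. trunc_weight w s (Suc k) j \<omega> \<partial>gw_tree j)
     = (\<integral>x. w x * (\<Prod>i\<in>UNIV. (\<integral>\<omega>. trunc_weight w s k i \<omega> \<partial>gw_tree i) ^ snd x i) \<partial>J j)"
proof -
  define m where "m i = (\<integral>\<omega>. trunc_weight w s k i \<omega> \<partial>gw_tree i)" for i
  have m01: "0 \<le> m i" "m i \<le> 1" for i
    unfolding m_def by (rule integral_trunc_weight_nonneg integral_trunc_weight_le_1)+
  have m: "(\<integral>\<^sup>+\<omega>. ennreal (trunc_weight w s k i \<omega>) \<partial>gw_tree i) = ennreal (m i)" for i
    unfolding m_def using w s integrable_trunc_weight
    by (simp add: nn_integral_eq_integral trunc_weight_nonneg)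
  have f: "0 \<le> w x * (\<Prod>i\<in>UNIV. m i ^ snd x i)" for x
    by (intro mult_nonneg_nonneg prod_nonneg zero_le_power w(2) m01)
  have "ennreal (\<integral>\<omega>. trunc_weight w s (Suc k) j \<omega> \<partial>gw_tree j) =
      (\<integral>\<^sup>+\<omega>. ennreal (trunc_weight w s (Suc k) j \<omega>) \<partial>gw_tree j)"
    by (rule nn_integral_eq_integral[symmetric, OF integrable_trunc_weight])
      (intro AE_I2 trunc_weight_nonneg w(2) s(1))
  also have "\<dots> = (\<integral>\<^sup>+x. ennreal (w x) *
      (\<Prod>i\<in>UNIV. (\<integral>\<^sup>+\<omega>. ennreal (trunc_weight w s k i \<omega>) \<partial>gw_tree i) ^ snd x i) \<partial>J j)"
    by (rule nn_integral_trunc_weight_Suc[OF w(1,2) s(1)])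
  also have "\<dots> = (\<integral>\<^sup>+x. ennreal (w x * (\<Prod>i\<in>UNIV. m i ^ snd x i)) \<partial>J j)"
    by (intro nn_integral_cong) (simp add: m w(2) m01 ennreal_mult prod_nonneg prod_ennreal ennreal_power)
  also have "\<dots> = ennreal (\<integral>x. w x * (\<Prod>i\<in>UNIV. m i ^ snd x i) \<partial>J j)"
    by (intro nn_integral_eq_integral integrable_weight_prod_power w m01 AE_I2 f)
  finally have "ennreal (\<integral>\<omega>. trunc_weight w s (Suc k) j \<omega> \<partial>gw_tree j) =
      ennreal (\<integral>x. w x * (\<Prod>i\<in>UNIV. m i ^ snd x i) \<partial>J j)" .
  moreover have "0 \<le> (\<integral>x. w x * (\<Prod>i\<in>UNIV. m i ^ snd x i) \<partial>J j)"
    by (intro Bochner_Integration.integral_nonneg f)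
  ultimately show ?thesis
    unfolding m_def[symmetric] using ennreal_inj[OF integral_trunc_weight_nonneg] by blast
qed

lemma integral_trunc_weight_Suc_le: "(\<integral>\<omega>. trunc_weight w s (Suc k) j \<omega> \<partial>gw_tree j) \<le> (\<integral>x. w x \<partial>J j)"
  unfolding integral_trunc_weight_Suc
proof (rule integral_mono)
  show "integrable (J j) (\<lambda>x. w x * (\<Prod>i\<in>UNIV. (\<integral>\<omega>. trunc_weight w s k i \<omega> \<partial>gw_tree i) ^ snd x i))"
    by (intro integrable_weight_prod_power w integral_trunc_weight_nonneg integral_trunc_weight_le_1)
  show "integrable (J j) w"
    using w by (intro integrable_unit_bounded prob_space_J) simp_all
  show "w x * (\<Prod>i\<in>UNIV. (\<integral>\<omega>. trunc_weight w s k i \<omega> \<partial>gw_tree i) ^ snd x i) \<le> w x" for x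
    by (intro mult_left_le prod_le_1 conjI zero_le_power power_le_one w(2)
        integral_trunc_weight_nonneg integral_trunc_weight_le_1)
qed

end

lemma integral_trunc_weight_zero_le:
  assumes "w \<in> borel_measurable borel" "\<And>x. 0 \<le> w x" "\<And>x. w x \<le> 1"
  shows "(\<integral>\<omega>. trunc_weight w (\<lambda>_. 0) k j \<omega> \<partial>gw_tree j) \<le> (\<integral>\<omega>. trunc_weight w (\<lambda>_. 1) k j \<omega> \<partial>gw_tree j)"
  using assms by (intro integral_mono integrable_trunc_weight) (simp_all add: trunc_weight_zero trunc_weight_nonneg)

text \<open>The contraction behind the estimate: once the means of the truncated weights are at
  most 1/2, the map from the means at depth k to those at depth k + 1 halves sup-distances.\<close>

lemma trunc_weight_gap:
  assumes v: "v \<in> borel_measurable borel" "\<And>x. 0 \<le> v x" "\<And>x. v x \<le> 1"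
    and half: "\<And>j. (\<integral>x. v x \<partial>J j) \<le> 1/2"
  shows "(\<integral>\<omega>. trunc_weight v (\<lambda>_. 1) k j \<omega> \<partial>gw_tree j)
    \<le> (\<integral>\<omega>. trunc_weight v (\<lambda>_. 0) k j \<omega> \<partial>gw_tree j) + (1/2)^k"
proof -
  define q where "q k j = (\<integral>\<omega>. trunc_weight v (\<lambda>_. 1) k j \<omega> \<partial>gw_tree j)" for k j
  define z where "z k j = (\<integral>\<omega>. trunc_weight v (\<lambda>_. 0) k j \<omega> \<partial>gw_tree j)" for k j
  have q01: "0 \<le> q k i" "q k i \<le> 1" and z01: "0 \<le> z k i" "z k i \<le> 1" for k i
    unfolding q_def z_def using v
    by (simp_all add: integral_trunc_weight_nonneg integral_trunc_weight_le_1)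
  have zq: "z k i \<le> q k i" for k i
    unfolding q_def z_def by (rule integral_trunc_weight_zero_le[OF v])
  have q_half: "q (Suc k) i \<le> 1/2" for k i
  proof -
    have "q (Suc k) i \<le> (\<integral>x. v x \<partial>J i)"
      unfolding q_def by (rule integral_trunc_weight_Suc_le[OF v]) simp_all
    with half[of i] show ?thesis
      by linarith
  qed
  have q_Suc: "q (Suc k) i = (\<integral>x. v x * (\<Prod>j\<in>UNIV. q k j ^ snd x j) \<partial>J i)"
    and z_Suc: "z (Suc k) i = (\<integral>x. v x * (\<Prod>j\<in>UNIV. z k j ^ snd x j) \<partial>J i)" for k i
    unfolding q_def z_def using v by (simp_all add: integral_trunc_weight_Suc)
  have int_v: "integrable (J i) v" for i
    using v by (intro integrable_unit_bounded prob_space_J) simp_all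
  show ?thesis
    unfolding q_def[symmetric] z_def[symmetric]
  proof (induction k arbitrary: j)
    case 0
    show ?case
      using q01 z01 by (simp add: add_increasing)
  next
    case (Suc k)
    have gap: "(\<Prod>i\<in>UNIV. q k i ^ a i) \<le> (\<Prod>i\<in>UNIV. z k i ^ a i) + (1/2)^k" for a
    proof (cases k)
      case 0
      have "(\<Prod>i\<in>UNIV. q k i ^ a i) \<le> 1" "0 \<le> (\<Prod>i\<in>UNIV. z k i ^ a i)"
        using q01 z01 by (auto intro!: prod_le_1 prod_nonneg power_le_one)
      with 0 show ?thesis
        by simp
    next
      case (Suc k')
      show ?thesis
        using Suc.IH zq z01 q_half Suc by (intro prod_power_le_prod_power_add) auto
    qed
    have "v x * (\<Prod>i\<in>UNIV. q k i ^ snd x i) \<le> v x * (\<Prod>i\<in>UNIV. z k i ^ snd x i) + (1/2)^k * v x" for x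
      using mult_left_mono[OF gap v(2)] by (simp add: algebra_simps)
    then have "q (Suc k) j \<le> (\<integral>x. v x * (\<Prod>i\<in>UNIV. z k i ^ snd x i) + (1/2)^k * v x \<partial>J j)"
      unfolding q_Suc using q01 z01 int_v
      by (intro integral_mono integrable_weight_prod_power[OF v] Bochner_Integration.integrable_add) auto
    also have "\<dots> = z (Suc k) j + (1/2)^k * (\<integral>x. v x \<partial>J j)"
      unfolding z_Suc using z01 int_v integrable_weight_prod_power[OF v, of "z k"] by simp
    also have "\<dots> \<le> z (Suc k) j + (1/2)^Suc k"
      using mult_left_mono[OF half[of j], of "(1/2)^k"] by simp
    finally show ?case .
  qed
qed

end

section \<open>Trees of infinite height and minimality\<close>

lemma measure_fst_less_tendsto_0:
  fixes M :: "'n::finite sa measure"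
  assumes "prob_space M" "sets M = sets borel" "AE x in M. 0 < fst x"
  shows "(\<lambda>n. measure M {x. fst x < 1 / real (Suc n)}) \<longlonglongrightarrow> 0"
proof -
  interpret prob_space M
    by fact
  have sets: "{x::'n sa. fst x < c} \<in> sets M" "{x::'n sa. fst x \<le> c} \<in> sets M" for c
    unfolding assms(2) by measurable
  have "(\<lambda>n. measure M {x. fst x < 1 / real (Suc n)}) \<longlonglongrightarrow> measure M (\<Inter>n. {x. fst x < 1 / real (Suc n)})"
  proof (rule finite_Lim_measure_decseq)
    show "decseq (\<lambda>n. {x. fst x < 1 / real (Suc n)})"
    proof (rule decseq_SucI)
      fix n
      have "1 / real (Suc (Suc n)) \<le> 1 / real (Suc n)"
        by (rule inverse_of_nat_le) auto
      then show "{x. fst x < 1 / real (Suc (Suc n))} \<subseteq> {x. fst x < 1 / real (Suc n)}"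
        by auto
    qed
  qed (use sets in auto)
  also have "(\<Inter>n. {x. fst x < 1 / real (Suc n)}) = {x. fst x \<le> 0}"
    by (rule Inter_less_inverse_Suc)
  also have "measure M {x. fst x \<le> 0} = 0"
    using AE_iff_measurable[OF sets(2), of "\<lambda>x. 0 < fst x"] assms(3)
    by (auto simp: measure_def not_less sets_eq_imp_space_eq[OF assms(2)])
  finally show ?thesis .
qed

lemma node_discount_le_step:
  assumes "0 < \<delta>" and "ln 4 \<le> \<kappa> * \<delta>"
  shows "node_discount \<kappa> x \<le> (if \<delta> \<le> fst x then 1/4 else 1)"
proof -
  have "0 < \<kappa> * \<delta>"
    using assms(2) ln_gt_zero[of 4] by linarith
  then have "0 \<le> \<kappa>"
    using assms(1) by (simp add: zero_less_mult_iff)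
  show ?thesis
  proof (cases "\<delta> \<le> fst x")
    case True
    have "ln 4 \<le> \<kappa> * fst x"
      using assms(2) mult_left_mono[OF True \<open>0 \<le> \<kappa>\<close>] by linarith
    then have "node_discount \<kappa> x \<le> exp (- ln 4)"
      using True assms(1) by (simp add: node_discount_def)
    also have "\<dots> = 1/4"
      by (simp add: exp_minus)
    finally show ?thesis
      using True by simp
  next
    case False
    with \<open>0 \<le> \<kappa>\<close> show ?thesis
      by (simp add: node_discount_def)
  qed
qed

context multitype_gw
begin

lemma uniformly_small_durations:
  assumes pos: "\<And>j. AE x in J j. 0 < fst x" and "0 < e"
  shows "\<exists>\<delta>>0. \<forall>j. measure (J j) {x. fst x < \<delta>} \<le> e"
proof -
  define A where "A n = {x::'n sa. fst x < 1 / real (Suc n)}" for n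
  have "\<exists>n. measure (J j) (A n) \<le> e" for j
  proof -
    have "eventually (\<lambda>n. measure (J j) (A n) < e) sequentially"
      unfolding A_def using measure_fst_less_tendsto_0[OF prob_space_J sets_J pos] \<open>0 < e\<close>
      by (rule order_tendstoD)
    then obtain n where "measure (J j) (A n) < e"
      using eventually_happens'[OF sequentially_bot] by blast
    then show ?thesis
      by (intro exI[of _ n]) simp
  qed
  then obtain f where f: "\<And>j. measure (J j) (A (f j)) \<le> e"
    by metis
  define N where "N = Max (range f)"
  have "measure (J j) (A N) \<le> e" for j
  proof -
    interpret prob_space "J j"
      by (rule prob_space_J)
    have "f j \<le> N"
      unfolding N_def by (rule Max_ge) auto
    then have "1 / real (Suc N) \<le> 1 / real (Suc (f j))"
      by (intro inverse_of_nat_le) auto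
    then have "A N \<subseteq> A (f j)"
      by (auto simp: A_def)
    moreover have "A (f j) \<in> sets (J j)"
      unfolding A_def sets_J by measurable
    ultimately have "measure (J j) (A N) \<le> measure (J j) (A (f j))"
      by (rule finite_measure_mono)
    with f[of j] show ?thesis
      by linarith
  qed
  then show ?thesis
    by (intro exI[of _ "1 / real (Suc N)"]) (simp add: A_def)
qed

lemma dominating_weight:
  assumes pos: "\<And>j. AE x in J j. 0 < fst x"
  obtains \<kappa> v where "0 \<le> \<kappa>" "v \<in> borel_measurable borel" "\<And>x. node_discount \<kappa> x \<le> v x"
    "\<And>x. v x \<le> 1" "\<And>j. (\<integral>x. v x \<partial>J j) \<le> 1/2"
proof -
  obtain \<delta> where "0 < \<delta>" and small: "\<And>j. measure (J j) {x. fst x < \<delta>} \<le> 1/4"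
    using uniformly_small_durations[OF pos, of "1/4"] by auto
  define v where "v x = (if \<delta> \<le> fst x then 1/4 else (1::real))" for x :: "'n sa"
  define \<kappa> where "\<kappa> = ln 4 / \<delta>"
  have v_meas: "v \<in> borel_measurable borel"
    unfolding v_def[abs_def] by measurable
  show thesis
  proof (rule that[of \<kappa> v])
    show "0 \<le> \<kappa>" "v \<in> borel_measurable borel" "v x \<le> 1" for x
      using \<open>0 < \<delta>\<close> v_meas by (simp_all add: \<kappa>_def v_def)
    show "node_discount \<kappa> x \<le> v x" for x
      unfolding v_def using \<open>0 < \<delta>\<close> by (intro node_discount_le_step) (simp_all add: \<kappa>_def)
    show "(\<integral>x. v x \<partial>J j) \<le> 1/2" for j
    proof -
      interpret prob_space "J j"
        by (rule prob_space_J)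
      have S: "{x. fst x < \<delta>} \<in> sets (J j)"
        unfolding sets_J by measurable
      have int_v: "integrable (J j) v"
        using v_meas by (intro integrable_unit_bounded prob_space_J) (simp_all add: v_def)
      have int_S: "integrable (J j) (indicator {x. fst x < \<delta>} :: 'n sa \<Rightarrow> real)"
        using S by (intro integrable_unit_bounded prob_space_J borel_measurable_indicator) (simp_all split: split_indicator)
      have "(\<integral>x. v x \<partial>J j) \<le> (\<integral>x. 1/4 + indicator {x. fst x < \<delta>} x \<partial>J j)"
        by (intro integral_mono int_v Bochner_Integration.integrable_add int_S) (auto simp: v_def split: split_indicator)
      also have "\<dots> = 1/4 + measure (J j) {x. fst x < \<delta>}"
        using int_S prob_space by simp
      also have "\<dots> \<le> 1/2"
        using small[of j] by simp
      finally show ?thesis .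
    qed
  qed
qed

lemma AE_infinite_height_busy_infinite:
  assumes pos: "\<And>j. AE x in J j. 0 < fst x"
  shows "AE \<omega> in gw_tree i. (\<forall>k. \<not> height_less k \<omega>) \<longrightarrow> busy \<omega> = \<top>"
proof -
  obtain \<kappa> v where \<kappa>: "0 \<le> \<kappa>" and v: "v \<in> borel_measurable borel" "\<And>x. node_discount \<kappa> x \<le> v x"
    "\<And>x. v x \<le> 1" and half: "\<And>j. (\<integral>x. v x \<partial>J j) \<le> 1/2"
    using dominating_weight[OF pos] by blast
  have v0: "0 \<le> v x" for x
    using order.trans[OF node_discount_nonneg v(2)] .
  define Y where "Y \<omega> = (if \<forall>k. \<not> height_less k \<omega> then lt_enn \<kappa> (busy \<omega>) else 0)" for \<omega> :: "'n tree"
  have Y0: "0 \<le> Y \<omega>" for \<omega>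
    by (simp add: Y_def)
  have "Y \<in> borel_measurable (gw_tree i)"
    unfolding Y_def[abs_def] measurable_gw_tree by measurable
  then have Y_int: "integrable (gw_tree i) Y"
    using \<kappa> Y0 by (intro integrable_unit_bounded prob_space_gw_space prob_space_J) (simp_all add: Y_def lt_enn_le_1)
  have int: "integrable (gw_tree i) (trunc_weight v (\<lambda>_. c) k i)" if "0 \<le> c" "c \<le> 1" for c k
    using v v0 that by (intro integrable_trunc_weight) auto
  have Y_le: "Y \<omega> \<le> trunc_weight v (\<lambda>_. 1) k i \<omega> - trunc_weight v (\<lambda>_. 0) k i \<omega>" for k \<omega>
  proof -
    have "0 \<le> trunc_weight v (\<lambda>_. 1) k i \<omega>"
      by (rule trunc_weight_nonneg) (simp_all add: v0)
    then show ?thesis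
      using lt_enn_busy_le_trunc_weight[OF \<kappa> v(2)] by (auto simp: Y_def trunc_weight_zero)
  qed
  have "(\<integral>\<omega>. Y \<omega> \<partial>gw_tree i) \<le> (1/2)^k" for k
  proof -
    have "(\<integral>\<omega>. Y \<omega> \<partial>gw_tree i) \<le>
        (\<integral>\<omega>. trunc_weight v (\<lambda>_. 1) k i \<omega> - trunc_weight v (\<lambda>_. 0) k i \<omega> \<partial>gw_tree i)"
      by (intro integral_mono Y_int Bochner_Integration.integrable_diff int Y_le) simp_all
    also have "\<dots> = (\<integral>\<omega>. trunc_weight v (\<lambda>_. 1) k i \<omega> \<partial>gw_tree i) - (\<integral>\<omega>. trunc_weight v (\<lambda>_. 0) k i \<omega> \<partial>gw_tree i)"
      by (intro Bochner_Integration.integral_diff int) simp_all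
    also have "\<dots> \<le> (1/2)^k"
      using trunc_weight_gap[OF v(1) v0 v(3) half, where k=k and j=i] by simp
    finally show ?thesis .
  qed
  then have "(\<integral>\<omega>. Y \<omega> \<partial>gw_tree i) \<le> 0"
    by (intro LIMSEQ_le_const[OF LIMSEQ_power_zero[of "1/2 :: real"]]) auto
  moreover have "0 \<le> (\<integral>\<omega>. Y \<omega> \<partial>gw_tree i)"
    by (intro Bochner_Integration.integral_nonneg Y0)
  ultimately have "AE \<omega> in gw_tree i. Y \<omega> = 0"
    using integral_nonneg_eq_0_iff_AE[OF Y_int AE_I2[OF Y0]] by simp
  then show ?thesis
    by eventually_elim (auto simp: Y_def lt_enn_eq_0_iff)
qed

lemma AE_lt_enn_busy_eq_SUP_trunc_weight:
  assumes pos: "\<And>j. AE x in J j. 0 < fst x"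
  shows "AE \<omega> in gw_tree i.
    ennreal (lt_enn \<theta> (busy \<omega>)) = (SUP k. ennreal (trunc_weight (node_discount \<theta>) (\<lambda>_. 0) k i \<omega>))"
  using AE_infinite_height_busy_infinite[OF pos]
proof eventually_elim
  case (elim \<omega>)
  note t = trunc_weight_node_discount_zero[of \<theta> _ i \<omega>]
  show ?case
  proof (cases "\<exists>k. height_less k \<omega>")
    case True
    then obtain k where "height_less k \<omega>"
      by blast
    then show ?thesis
      by (intro antisym SUP_upper2[of k] SUP_least) (auto simp: t)
  next
    case False
    with elim show ?thesis
      by (simp add: t lt_enn_def)
  qed
qed

lemma nn_integral_trunc_weight_le_fixed_point:
  assumes pos: "\<And>j. AE x in J j. 0 < fst x"
    and c: "\<And>j. 0 \<le> c j" "\<And>j. ennreal (c j) = sa_transform (J j) \<theta> c"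
  shows "(\<integral>\<^sup>+\<omega>. ennreal (trunc_weight (node_discount \<theta>) (\<lambda>_. 0) k j \<omega>) \<partial>gw_tree j) \<le> ennreal (c j)"
proof (induction k arbitrary: j)
  case (Suc k)
  let ?t = "\<lambda>k j \<omega>. ennreal (trunc_weight (node_discount \<theta>) (\<lambda>_. 0) k j \<omega>)"
  have "(\<integral>\<^sup>+\<omega>. ?t (Suc k) j \<omega> \<partial>gw_tree j) =
      (\<integral>\<^sup>+x. ennreal (node_discount \<theta> x) * (\<Prod>i\<in>UNIV. (\<integral>\<^sup>+\<omega>. ?t k i \<omega> \<partial>gw_tree i) ^ snd x i) \<partial>J j)"
    by (rule nn_integral_trunc_weight_Suc[OF borel_measurable_node_discount node_discount_nonneg]) simp
  also have "\<dots> \<le> (\<integral>\<^sup>+x. ennreal (node_discount \<theta> x) * (\<Prod>i\<in>UNIV. ennreal (c i) ^ snd x i) \<partial>J j)"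
    by (intro nn_integral_mono mult_left_mono prod_mono_ennreal power_mono_ennreal Suc.IH) simp
  also have "\<dots> = sa_transform (J j) \<theta> c"
  proof -
    have "AE x in J j. ennreal (node_discount \<theta> x) * (\<Prod>i\<in>UNIV. ennreal (c i) ^ snd x i) =
        ennreal (exp (- \<theta> * fst x) * (\<Prod>i\<in>UNIV. c i ^ snd x i))"
      using pos[of j]
      by eventually_elim (simp add: node_discount_def ennreal_mult prod_nonneg c(1) prod_ennreal ennreal_power)
    then show ?thesis
      unfolding sa_transform_def by (rule nn_integral_cong_AE)
  qed
  finally show ?case
    by (simp add: c(2)[symmetric])
qed simp

lemma busy_transform_le_fixed_point:
  assumes pos: "\<And>j. AE x in J j. 0 < fst x" and "0 \<le> \<theta>"
    and c: "\<And>j. 0 \<le> c j" "\<And>j. ennreal (c j) = sa_transform (J j) \<theta> c"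
  shows "busy_transform (J i) J \<theta> \<le> c i"
proof -
  let ?t = "\<lambda>k \<omega>. ennreal (trunc_weight (node_discount \<theta>) (\<lambda>_. 0) k i \<omega>)"
  have "ennreal (busy_transform (J i) J \<theta>) = (\<integral>\<^sup>+\<omega>. ennreal (lt_enn \<theta> (busy \<omega>)) \<partial>gw_tree i)"
    using \<open>0 \<le> \<theta>\<close> by (simp add: busy_transform_eq_nn_integral prob_space_J sets_J)
  also have "\<dots> = (\<integral>\<^sup>+\<omega>. (SUP k. ?t k \<omega>) \<partial>gw_tree i)"
    by (rule nn_integral_cong_AE[OF AE_lt_enn_busy_eq_SUP_trunc_weight[OF pos]])
  also have "\<dots> = (SUP k. \<integral>\<^sup>+\<omega>. ?t k \<omega> \<partial>gw_tree i)"
  proof (rule nn_integral_monotone_convergence_SUP)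
    show "incseq ?t"
      by (intro incseq_SucI le_funI)
        (auto simp: trunc_weight_node_discount_zero simp del: height_less.simps trunc_weight.simps dest: height_less_Suc)
  qed simp
  also have "\<dots> \<le> ennreal (c i)"
    by (rule SUP_least) (rule nn_integral_trunc_weight_le_fixed_point[OF pos c])
  finally show ?thesis
    using c(1) by simp
qed

end

theorem mainTheorem2:
  fixes J :: "'n::finite \<Rightarrow> 'n sa measure" and \<theta> :: real and b :: "'n \<Rightarrow> real"
  assumes J_prob: "\<forall>i. prob_space (J i)"
    and J_sets: "\<forall>i. sets (J i) = sets borel"
    and J_pos: "\<forall>i. AE x in J i. fst x > 0"
    and theta: "\<theta> \<ge> 0"
    and b_def: "\<forall>i. b i = busy_transform (J i) J \<theta>"
  shows "(\<forall>V. prob_space V \<and> sets V = sets borel \<and> (AE x in V. fst x \<ge> 0) \<longrightarrow>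
            ennreal (busy_transform V J \<theta>) = sa_transform V \<theta> b)
       \<and> (\<forall>i. ennreal (b i) = sa_transform (J i) \<theta> b)
       \<and> (\<forall>c. (\<forall>i. c i \<ge> 0) \<and> (\<forall>i. ennreal (c i) = sa_transform (J i) \<theta> c) \<longrightarrow> (\<forall>i. b i \<le> c i))"
proof -
  interpret multitype_gw J
    by (rule multitype_gw.intro) (use J_prob J_sets in blast)+
  have b: "b = (\<lambda>j. busy_transform (J j) J \<theta>)"
    using b_def by (simp add: fun_eq_iff)
  have pos: "\<And>j. AE x in J j. 0 < fst x"
    using J_pos by auto
  show ?thesis
  proof (intro conjI allI impI)
    fix V :: "'n sa measure"
    assume "prob_space V \<and> sets V = sets borel \<and> (AE x in V. 0 \<le> fst x)"
    then show "ennreal (busy_transform V J \<theta>) = sa_transform V \<theta> b"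
      unfolding b by (intro busy_transform_branching[OF theta]) auto
  next
    fix i
    show "ennreal (b i) = sa_transform (J i) \<theta> b"
      using busy_transform_branching[OF theta prob_space_J sets_J eventually_mono[OF pos less_imp_le]]
      unfolding b by simp
  next
    fix c :: "'n \<Rightarrow> real" and i
    assume "(\<forall>i. 0 \<le> c i) \<and> (\<forall>i. ennreal (c i) = sa_transform (J i) \<theta> c)"
    then have "\<And>j. 0 \<le> c j" "\<And>j. ennreal (c j) = sa_transform (J j) \<theta> c"
      by auto
    then show "b i \<le> c i"
      unfolding b by (rule busy_transform_le_fixed_point[OF pos theta])
  qed
qed

end
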